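(* Let $f_0(n)=1$ for odd $n$ and $f_0(n)=0$ for even $n$. Then for every $m\ge1$ and $1\le k\le n$, $c_m(n,k)$ equals the number of words of length $n-1$ over the alphabet $\{0,1,\ldots,m\}$ with exactly $k-1$ letters equal to $m$ that avoid runs of zeros of odd length (every maximal block of consecutive zeros has even length).
   Context: For $m\ge 1$, $f_m$ is the invert transform of $f_{m-1}$, i.e. $f_m(n)=f_{m-1}(n)+\sum_{i=1}^{n-1}f_{m-1}(i)f_m(n-i)$ for $n\ge1$. For $m\ge1$ the numbers $c_m(n,k)$, $0\le k\le n$, are defined by $c_m(0,0)=1$, $c_m(n,0)=0$ for $n\ge1$, and $c_m(n,k)=\sum_{i=1}^{n-k+1}f_{m-1}(i)\,c_m(n-i,k-1)$ for $1\le k\le n$. Words may be empty. *)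

theory Defs
  imports Main
begin

function invert :: "(nat \<Rightarrow> nat) \<Rightarrow> nat \<Rightarrow> nat" where
  "invert g n = (if n = 0 then 0 else g n + (\<Sum>i = 1..n-1. g i * invert g (n - i)))"
  by pat_completeness auto
termination by (relation "measure (\<lambda>(g, n). n)") auto

fun fseq :: "nat \<Rightarrow> nat \<Rightarrow> nat" where
  "fseq 0 n = (if odd n then 1 else 0)"
| "fseq (Suc m) n = invert (fseq m) n"

fun cgen :: "(nat \<Rightarrow> nat) \<Rightarrow> nat \<Rightarrow> nat \<Rightarrow> nat" where
  "cgen g n 0 = (if n = 0 then 1 else 0)"
| "cgen g n (Suc k) = (\<Sum>i = 1..n - k. g i * cgen g (n - i) k)"

definition cm :: "nat \<Rightarrow> nat \<Rightarrow> nat \<Rightarrow> nat" where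
  "cm m n k = cgen (fseq (m - 1)) n k"

definition no_odd_zero_runs :: "nat list \<Rightarrow> bool" where
  "no_odd_zero_runs w \<longleftrightarrow>
     (\<forall>i j. i \<le> j \<and> j < length w \<and> (\<forall>t. i \<le> t \<and> t \<le> j \<longrightarrow> w ! t = 0)
        \<and> (i = 0 \<or> w ! (i - 1) \<noteq> 0) \<and> (Suc j = length w \<or> w ! Suc j \<noteq> 0)
        \<longrightarrow> even (j - i + 1))"

end

theory Submission
  imports Defs
begin

(*
  A word avoids odd runs of zeros iff its zeros can be paired off from left to right
  (zeros_paired). Pairing is insensitive to cutting a word at a nonzero letter c:
  u @ c # v is paired iff u and v are. Splitting a paired word over {0..m+1} at the first
  occurrence of its top letter m+1 therefore gives, for the number W(m, L) of paired words of
  length L over {0..m}, the recursion W(m+1, L) = W(m, L) + \<Sum>p<L. W(m, p) W(m+1, L-1-p),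
  which is the invert transform of f_m shifted by one; so W(m, L) = f_m(L+1). Splitting at
  the first occurrence of the letter m+1 while tracking how often it occurs yields, in the
  same way, the convolution recursion defining c_(m+1)(L+1, k+1).
*)

definition zero_block :: "nat list \<Rightarrow> nat \<Rightarrow> nat \<Rightarrow> bool" where
  "zero_block w i j \<longleftrightarrow> i \<le> j \<and> j < length w \<and> (\<forall>t. i \<le> t \<and> t \<le> j \<longrightarrow> w ! t = 0)
     \<and> (i = 0 \<or> w ! (i - 1) \<noteq> 0) \<and> (Suc j = length w \<or> w ! Suc j \<noteq> 0)"

lemma no_odd_zero_runs_iff_zero_blocks:
  "no_odd_zero_runs w \<longleftrightarrow> (\<forall>i j. zero_block w i j \<longrightarrow> even (j - i + 1))"
  unfolding no_odd_zero_runs_def zero_block_def by blast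

lemma zero_block_Cons_Suc:
  "zero_block (x # w) (Suc i) (Suc j) \<longleftrightarrow> zero_block w i j \<and> (i = 0 \<longrightarrow> x \<noteq> 0)"
proof -
  have "(\<forall>t. Suc i \<le> t \<and> t \<le> Suc j \<longrightarrow> (x # w) ! t = 0) \<longleftrightarrow>
      (\<forall>t. i \<le> t \<and> t \<le> j \<longrightarrow> w ! t = 0)"
    by (metis Suc_le_D Suc_le_mono nth_Cons_Suc)
  then show ?thesis
    unfolding zero_block_def by (cases i) auto
qed

lemma zero_block_Cons_0:
  "zero_block (x # w) 0 j \<longleftrightarrow>
     x = 0 \<and> (case j of 0 \<Rightarrow> w = [] \<or> w ! 0 \<noteq> 0 | Suc j' \<Rightarrow> zero_block w 0 j')"
proof -
  have "(\<forall>t. t \<le> Suc j' \<longrightarrow> (x # w) ! t = 0) \<longleftrightarrow>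
      x = 0 \<and> (\<forall>t. t \<le> j' \<longrightarrow> w ! t = 0)" for j'
    by (metis Suc_le_mono le0 nth_Cons_0 nth_Cons_Suc not0_implies_Suc)
  then show ?thesis
    unfolding zero_block_def by (cases j) (auto simp: neq_Nil_conv)
qed

lemma zero_block_le: "zero_block w i j \<Longrightarrow> i \<le> j"
  by (simp add: zero_block_def)

lemma zero_blocks_Cons_split:
  "(\<forall>i j. zero_block (x # w) i j \<longrightarrow> even (j - i + 1)) \<longleftrightarrow>
     (\<forall>j. zero_block (x # w) 0 j \<longrightarrow> odd j) \<and>
     (\<forall>i j. zero_block (x # w) (Suc i) (Suc j) \<longrightarrow> even (j - i + 1))"
  (is "?all \<longleftrightarrow> ?first \<and> ?rest")
proof
  assume all: ?all
  show "?first \<and> ?rest"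
  proof (intro conjI allI impI)
    fix j assume "zero_block (x # w) 0 j"
    from all[rule_format, OF this] show "odd j" by simp
  next
    fix i j assume "zero_block (x # w) (Suc i) (Suc j)"
    from all[rule_format, OF this] show "even (j - i + 1)" by simp
  qed
next
  assume H: "?first \<and> ?rest"
  show ?all
  proof (intro allI impI)
    fix i j assume block: "zero_block (x # w) i j"
    show "even (j - i + 1)"
    proof (cases i)
      case 0
      then show ?thesis using H block by simp
    next
      case (Suc i')
      then obtain j' where "j = Suc j'"
        using zero_block_le[OF block] by (cases j) auto
      then show ?thesis using H block Suc by simp
    qed
  qed
qed

lemma no_odd_zero_runs_Cons_iff:
  "no_odd_zero_runs (x # w) \<longleftrightarrow>
     (\<forall>j. zero_block (x # w) 0 j \<longrightarrow> odd j) \<and>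
     (\<forall>i j. zero_block w i j \<and> (i = 0 \<longrightarrow> x \<noteq> 0) \<longrightarrow> even (j - i + 1))"
  unfolding no_odd_zero_runs_iff_zero_blocks zero_blocks_Cons_split zero_block_Cons_Suc
  by simp

lemma no_odd_zero_runs_nonzero_Cons:
  assumes "x \<noteq> 0"
  shows "no_odd_zero_runs (x # w) \<longleftrightarrow> no_odd_zero_runs w"
  using assms unfolding no_odd_zero_runs_Cons_iff no_odd_zero_runs_iff_zero_blocks[of w]
  by (simp add: zero_block_Cons_0)

lemma not_no_odd_zero_runs_single_zero:
  assumes "w = [] \<or> w ! 0 \<noteq> 0"
  shows "\<not> no_odd_zero_runs (0 # w)"
proof -
  have "zero_block (0 # w) 0 0"
    using assms by (simp add: zero_block_Cons_0)
  then show ?thesis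
    unfolding no_odd_zero_runs_Cons_iff by fastforce
qed

lemma no_odd_zero_runs_zero_zero_Cons:
  "no_odd_zero_runs (0 # 0 # w) \<longleftrightarrow> no_odd_zero_runs w"
proof -
  have shift: "zero_block (0 # 0 # w) 0 (Suc (Suc j)) \<longleftrightarrow> zero_block w 0 j" for j
    by (simp add: zero_block_Cons_0)
  have "(\<forall>j. zero_block (0 # 0 # w) 0 j \<longrightarrow> odd j) \<longleftrightarrow> (\<forall>j. zero_block w 0 j \<longrightarrow> odd j)"
  proof (intro iffI allI impI)
    fix j assume "\<forall>j. zero_block (0 # 0 # w) 0 j \<longrightarrow> odd j" "zero_block w 0 j"
    then show "odd j" using shift by fastforce
  next
    fix j assume first: "\<forall>j. zero_block w 0 j \<longrightarrow> odd j" and "zero_block (0 # 0 # w) 0 j"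
    then have "j \<noteq> 0" by (cases j) (auto simp: zero_block_Cons_0)
    then consider "j = 1" | j' where "j = Suc (Suc j')"
      by (metis One_nat_def not0_implies_Suc)
    then show "odd j"
      by cases (use first shift \<open>zero_block (0 # 0 # w) 0 j\<close> in auto)
  qed
  moreover have "(\<forall>i j. zero_block (0 # w) i j \<and> i \<noteq> 0 \<longrightarrow> even (j - i + 1)) \<longleftrightarrow>
      (\<forall>i j. zero_block w i j \<and> i \<noteq> 0 \<longrightarrow> even (j - i + 1))"
  proof (intro iffI allI impI)
    fix i j assume "\<forall>i j. zero_block (0 # w) i j \<and> i \<noteq> 0 \<longrightarrow> even (j - i + 1)"
      and "zero_block w i j \<and> i \<noteq> 0"
    then show "even (j - i + 1)"
      using zero_block_Cons_Suc[of 0 w i j] by fastforce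
  next
    fix i j assume later: "\<forall>i j. zero_block w i j \<and> i \<noteq> 0 \<longrightarrow> even (j - i + 1)"
      and block: "zero_block (0 # w) i j \<and> i \<noteq> 0"
    then obtain i' where i: "i = Suc i'" by (metis not0_implies_Suc)
    with block obtain j' where j: "j = Suc j'"
      using zero_block_le by (cases j) fastforce+
    show "even (j - i + 1)"
      using later block zero_block_Cons_Suc[of 0 w i' j'] unfolding i j by simp
  qed
  moreover have "(\<forall>i j. zero_block w i j \<longrightarrow> even (j - i + 1)) \<longleftrightarrow>
      (\<forall>j. zero_block w 0 j \<longrightarrow> odd j) \<and>
      (\<forall>i j. zero_block w i j \<and> i \<noteq> 0 \<longrightarrow> even (j - i + 1))"
    by (metis diff_zero even_add odd_one)
  ultimately show ?thesis
    unfolding no_odd_zero_runs_Cons_iff[of 0 "0 # w"] no_odd_zero_runs_iff_zero_blocks[of w]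
    by simp
qed

fun zeros_paired :: "nat list \<Rightarrow> bool" where
  "zeros_paired [] = True"
| "zeros_paired (0 # 0 # w) = zeros_paired w"
| "zeros_paired (0 # _) = False"
| "zeros_paired (Suc _ # w) = zeros_paired w"

lemma no_odd_zero_runs_Nil: "no_odd_zero_runs []"
  by (simp add: no_odd_zero_runs_def)

lemma no_odd_zero_runs_iff_zeros_paired: "no_odd_zero_runs w \<longleftrightarrow> zeros_paired w"
  by (induction w rule: zeros_paired.induct)
    (simp_all add: no_odd_zero_runs_Nil no_odd_zero_runs_zero_zero_Cons
      not_no_odd_zero_runs_single_zero no_odd_zero_runs_nonzero_Cons)

lemma zeros_paired_append_nonzero:
  assumes "c \<noteq> 0"
  shows "zeros_paired (u @ c # v) \<longleftrightarrow> zeros_paired u \<and> zeros_paired v"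
proof -
  obtain c' where "c = Suc c'"
    using assms not0_implies_Suc by blast
  then show ?thesis
    by (induction u rule: zeros_paired.induct) simp_all
qed

lemma zeros_paired_replicate_zero: "zeros_paired (replicate n 0) \<longleftrightarrow> even n"
  by (induction n rule: nat_induct2) auto

definition paired_words :: "nat set \<Rightarrow> nat \<Rightarrow> nat list set" where
  "paired_words S L = {w. length w = L \<and> set w \<subseteq> S \<and> zeros_paired w}"

lemma finite_paired_words: "finite S \<Longrightarrow> finite (paired_words S L)"
  unfolding paired_words_def
  by (rule finite_subset[OF _ finite_lists_length_eq[of S L]]) auto

lemma paired_words_zero: "paired_words {0} L = (if even L then {replicate L 0} else {})"
proof -
  have replicate_iff: "length w = L \<and> set w \<subseteq> {0} \<longleftrightarrow> w = replicate L 0" for w :: "nat list"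
    by (auto intro!: replicate_length_same[symmetric])
  have "paired_words {0} L = {w. w = replicate L 0 \<and> zeros_paired w}"
    unfolding paired_words_def by (simp only: conj_assoc[symmetric] replicate_iff)
  also have "\<dots> = (if zeros_paired (replicate L 0) then {replicate L 0} else {})"
    by auto
  finally show ?thesis
    by (simp add: zeros_paired_replicate_zero)
qed

lemma append_Cons_inj:
  "c \<notin> set u \<Longrightarrow> c \<notin> set u' \<Longrightarrow> u @ c # v = u' @ c # v' \<Longrightarrow> u = u' \<and> v = v'"
proof (induction u arbitrary: u')
  case Nil
  then show ?case by (cases u') auto
next
  case (Cons a u)
  then show ?case by (cases u') auto
qed

lemma card_paired_words_by_first_occurrence:
  assumes "finite S" "c \<in> S" "c \<noteq> 0"
    and PQ: "\<And>u v. c \<notin> set u \<Longrightarrow> P (u @ c # v) \<longleftrightarrow> Q v"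
  shows "card {w \<in> paired_words S L. c \<in> set w \<and> P w} =
    (\<Sum>p<L. card (paired_words (S - {c}) p) * card {v \<in> paired_words S (L - Suc p). Q v})"
proof -
  define pieces where "pieces =
    (SIGMA p:{..<L}. paired_words (S - {c}) p \<times> {v \<in> paired_words S (L - Suc p). Q v})"
  define join where "join = (\<lambda>(p :: nat, u, v). u @ c # v)"
  have "{w \<in> paired_words S L. c \<in> set w \<and> P w} = join ` pieces"
  proof (intro equalityI subsetI)
    fix w assume w: "w \<in> {w \<in> paired_words S L. c \<in> set w \<and> P w}"
    then obtain u v where uv: "w = u @ c # v" "c \<notin> set u"
      by (metis (lifting) mem_Collect_eq split_list_first)
    then have "(length u, u, v) \<in> pieces"
      using w PQ \<open>c \<noteq> 0\<close> by (auto simp: pieces_def paired_words_def zeros_paired_append_nonzero)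
    then show "w \<in> join ` pieces"
      by (rule rev_image_eqI) (simp add: join_def uv)
  next
    fix w assume "w \<in> join ` pieces"
    then show "w \<in> {w \<in> paired_words S L. c \<in> set w \<and> P w}"
      using PQ \<open>c \<in> S\<close> \<open>c \<noteq> 0\<close>
      by (auto simp: pieces_def join_def paired_words_def zeros_paired_append_nonzero)
  qed
  moreover have "inj_on join pieces"
  proof (rule inj_onI)
    fix x y assume "x \<in> pieces" "y \<in> pieces" "join x = join y"
    moreover obtain p u v p' u' v' where "x = (p, u, v)" "y = (p', u', v')"
      by (cases x, cases y) auto
    ultimately show "x = y"
      using append_Cons_inj[of c u u' v v'] by (auto simp: pieces_def join_def paired_words_def)
  qed
  ultimately have "card {w \<in> paired_words S L. c \<in> set w \<and> P w} = card pieces"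
    by (simp add: card_image)
  also have "\<dots> = (\<Sum>p<L. card (paired_words (S - {c}) p) *
      card {v \<in> paired_words S (L - Suc p). Q v})"
    unfolding pieces_def using \<open>finite S\<close>
    by (subst card_SigmaI) (auto simp: card_cartesian_product finite_paired_words)
  finally show ?thesis .
qed

declare invert.simps [simp del]

lemma invert_Suc:
  "invert g (Suc n) = g (Suc n) + (\<Sum>p<n. g (Suc p) * invert g (n - p))"
  by (simp add: invert.simps[of g "Suc n"] sum.atLeast1_atMost_eq)

lemma cgen_eq_0: "n < k \<Longrightarrow> cgen g n k = 0"
  by (cases k) auto

lemma cgen_Suc: "cgen g n (Suc k) = (\<Sum>i = 1..n. g i * cgen g (n - i) k)"
proof -
  have "(\<Sum>i = 1..n - k. g i * cgen g (n - i) k) = (\<Sum>i = 1..n. g i * cgen g (n - i) k)"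
    by (rule sum.mono_neutral_left) (auto simp: cgen_eq_0)
  then show ?thesis by simp
qed

lemma card_paired_words_eq_fseq: "card (paired_words {0..m} L) = fseq m (Suc L)"
proof (induction m arbitrary: L)
  case 0
  then show ?case by (simp add: paired_words_zero)
next
  case (Suc m)
  show ?case
  proof (induction L rule: less_induct)
    case (less L)
    let ?new = "{w \<in> paired_words {0..Suc m} L. Suc m \<in> set w}"
    have "paired_words {0..Suc m} L = paired_words {0..m} L \<union> ?new"
      by (auto simp: paired_words_def le_Suc_eq)
    then have "card (paired_words {0..Suc m} L) = card (paired_words {0..m} L \<union> ?new)"
      by (rule arg_cong)
    also have "\<dots> = card (paired_words {0..m} L) + card ?new"
      by (rule card_Un_disjoint) (auto simp: finite_paired_words, auto simp: paired_words_def)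
    also have "card ?new =
        (\<Sum>p<L. card (paired_words {0..m} p) * card (paired_words {0..Suc m} (L - Suc p)))"
    proof -
      have "{0..Suc m} - {Suc m} = {0..m}" by auto
      then show ?thesis
        using card_paired_words_by_first_occurrence[of "{0..Suc m}" "Suc m" "\<lambda>_. True" "\<lambda>_. True"]
        by simp
    qed
    also have "\<dots> = (\<Sum>p<L. fseq m (Suc p) * invert (fseq m) (L - p))"
    proof (rule sum.cong)
      fix p assume "p \<in> {..<L}"
      then have "card (paired_words {0..Suc m} (L - Suc p)) = invert (fseq m) (L - p)"
        using less.IH[of "L - Suc p"] by (simp add: Suc_diff_Suc)
      then show "card (paired_words {0..m} p) * card (paired_words {0..Suc m} (L - Suc p))
          = fseq m (Suc p) * invert (fseq m) (L - p)"
        by (simp add: Suc.IH)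
    qed simp
    finally show ?case
      by (simp add: Suc.IH invert_Suc)
  qed
qed

lemma card_paired_words_with_count_eq_cgen:
  "card {w \<in> paired_words {0..Suc m} L. length (filter (\<lambda>x. x = Suc m) w) = k}
     = cgen (fseq m) (Suc L) (Suc k)"
proof (induction k arbitrary: L)
  case 0
  have "{w \<in> paired_words {0..Suc m} L. length (filter (\<lambda>x. x = Suc m) w) = 0}
      = paired_words {0..m} L"
    by (auto simp: paired_words_def filter_empty_conv le_Suc_eq)
  moreover have "cgen (fseq m) (Suc L) (Suc 0) = fseq m (Suc L)"
    by (simp add: sum.atLeast1_atMost_eq lessThan_Suc)
  ultimately show ?case
    by (simp add: card_paired_words_eq_fseq)
next
  case (Suc k)
  let ?count = "\<lambda>w. length (filter (\<lambda>x. x = Suc m) w)"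
  have "Suc m \<in> set w" if "?count w = Suc k" for w
  proof -
    from that have "filter (\<lambda>x. x = Suc m) w \<noteq> []" by auto
    then show ?thesis by (auto simp: filter_empty_conv)
  qed
  then have "card {w \<in> paired_words {0..Suc m} L. ?count w = Suc k}
      = card {w \<in> paired_words {0..Suc m} L. Suc m \<in> set w \<and> ?count w = Suc k}"
    by (intro arg_cong[where f = card]) blast
  also have "\<dots> = (\<Sum>p<L. card (paired_words {0..m} p) *
      card {v \<in> paired_words {0..Suc m} (L - Suc p). ?count v = k})"
  proof -
    have "{0..Suc m} - {Suc m} = {0..m}" by auto
    moreover have "?count (u @ Suc m # v) = Suc k \<longleftrightarrow> ?count v = k" if "Suc m \<notin> set u" for u v
    proof -
      have "filter (\<lambda>x. x = Suc m) u = []"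
        using that by (auto simp: filter_empty_conv)
      then show ?thesis by simp
    qed
    ultimately show ?thesis
      using card_paired_words_by_first_occurrence[of "{0..Suc m}" "Suc m"
          "\<lambda>w. ?count w = Suc k" "\<lambda>v. ?count v = k" L]
      by simp
  qed
  also have "\<dots> = (\<Sum>p<L. fseq m (Suc p) * cgen (fseq m) (L - p) (Suc k))"
    by (intro sum.cong) (simp_all add: Suc.IH card_paired_words_eq_fseq Suc_diff_Suc)
  also have "\<dots> = (\<Sum>p<Suc L. fseq m (Suc p) * cgen (fseq m) (L - p) (Suc k))"
    by (simp only: sum.lessThan_Suc diff_self_eq_0 cgen_eq_0[OF zero_less_Suc]
        mult_0_right add_0_right)
  also have "\<dots> = cgen (fseq m) (Suc L) (Suc (Suc k))"
    by (simp only: cgen_Suc[of _ "Suc L"] One_nat_def sum.atLeast1_atMost_eq diff_Suc_Suc)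
  finally show ?case .
qed

theorem corollary23:
  fixes m n k :: nat
  assumes "m \<ge> 1" and "1 \<le> k" and "k \<le> n"
  shows "cm m n k = card {w :: nat list. length w = n - 1 \<and> set w \<subseteq> {0..m}
            \<and> length (filter (\<lambda>x. x = m) w) = k - 1 \<and> no_odd_zero_runs w}"
proof -
  obtain m' L k' where "m = Suc m'" "n = Suc L" "k = Suc k'"
    using assms by (metis Suc_le_D One_nat_def order_trans)
  then show ?thesis
    using card_paired_words_with_count_eq_cgen[of m' L k']
    by (simp add: cm_def paired_words_def no_odd_zero_runs_iff_zeros_paired conj_ac)
qed

end
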